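(* Let $n\ge1$ and let $\mathfrak{n}=\mathfrak{n}(n)$ be as in the context. Let $D$ be a diagonalizable derivation of $\mathfrak{n}$ with eigenvalues $1$, $2$ and $3$. Then the eigenspaces of $D$ for the eigenvalues $1,2,3$ have dimensions $d_1=n+3$, $d_2=\frac{n(n+1)}{2}+3$ and $d_3=2n+2$ respectively. In particular, if $\mathfrak{n}=\tilde{\mathfrak{n}}_1\oplus\tilde{\mathfrak{n}}_2\oplus\tilde{\mathfrak{n}}_3$ is any grading of $\mathfrak{n}$, then $\dim\tilde{\mathfrak{n}}_i=d_i$ for $i=1,2,3$.
   Context: Fix a field of characteristic zero and a positive integer $n$. The Lie algebra $\mathfrak{n}(n)$ has basis $e_1,\dots,e_n,a,b,x$; $u,y$; $e_i\wedge e_j$ ($1\le i<j\le n$); $c$; $x_1,\dots,x_n$; $u_1,\dots,u_n$; $y_1,\dots,y_n$; $f,h$. Its bracket is defined on basis elements by: $[e_i,e_j]=e_i\wedge e_j$ for $i<j$ (so $[e_j,e_i]=-e_i\wedge e_j$), $[e_i,x]=x_i$, $[e_i,u]=u_i$, $[e_i,y]=y_i$, $[a,b]=c$, $[a,y]=f$, $[a,c]=h$, $[b,u]=h$, $[b,y]=h$, $[x,u]=f$, $[x,y]=h$, extended by antisymmetry, and all other brackets of pairs of basis elements are zero. A grading $\mathfrak{n}=\tilde{\mathfrak{n}}_1\oplus\tilde{\mathfrak{n}}_2\oplus\tilde{\mathfrak{n}}_3$ is a vector space decomposition with $[\tilde{\mathfrak{n}}_i,\tilde{\mathfrak{n}}_j]\subset\tilde{\mathfrak{n}}_{i+j}$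 for all $i,j$, where $\tilde{\mathfrak{n}}_m=0$ for $m>3$. *)

theory Defs
  imports Complex_Main "HOL-Library.Function_Algebras"
begin

text \<open>Basis labels of the Lie algebra n(n):
  E i = e_i, A = a, Bb = b, X = x, U = u, Y = y, EW i j = e_i wedge e_j,
  C = c, Xs i = x_i, Us i = u_i, Ys i = y_i, F = f, H = h.\<close>
datatype nb = E nat | A | Bb | X | U | Y | EW nat nat | C | Xs nat | Us nat | Ys nat | F | H

definition nbasis :: "nat \<Rightarrow> nb set" where
  "nbasis n = E ` {1..n} \<union> {A, Bb, X, U, Y, C, F, H}
     \<union> {EW i j | i j. 1 \<le> i \<and> i < j \<and> j \<le> n}
     \<union> Xs ` {1..n} \<union> Us ` {1..n} \<union> Ys ` {1..n}"

definition nspace :: "nat \<Rightarrow> (nb \<Rightarrow> 'k::field) set" where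
  "nspace n = {v. \<forall>k. k \<notin> nbasis n \<longrightarrow> v k = 0}"

definition sc :: "'k::field \<Rightarrow> (nb \<Rightarrow> 'k) \<Rightarrow> (nb \<Rightarrow> 'k)" where
  "sc c v = (\<lambda>k. c * v k)"

definition delta :: "nb \<Rightarrow> (nb \<Rightarrow> 'k::field)" where
  "delta r = (\<lambda>k. if k = r then 1 else 0)"

fun posbr :: "nb \<Rightarrow> nb \<Rightarrow> nb option" where
  "posbr (E i) (E j) = (if i < j then Some (EW i j) else None)"
| "posbr (E i) X = Some (Xs i)"
| "posbr (E i) U = Some (Us i)"
| "posbr (E i) Y = Some (Ys i)"
| "posbr A Bb = Some C"
| "posbr A Y = Some F"
| "posbr A C = Some H"
| "posbr Bb U = Some H"
| "posbr Bb Y = Some H"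
| "posbr X U = Some F"
| "posbr X Y = Some H"
| "posbr _ _ = None"

definition bb :: "nb \<Rightarrow> nb \<Rightarrow> (nb \<Rightarrow> 'k::field)" where
  "bb p q = (case posbr p q of Some r \<Rightarrow> delta r
             | None \<Rightarrow> (case posbr q p of Some r \<Rightarrow> - delta r | None \<Rightarrow> 0))"

definition lie :: "nat \<Rightarrow> (nb \<Rightarrow> 'k::field) \<Rightarrow> (nb \<Rightarrow> 'k) \<Rightarrow> (nb \<Rightarrow> 'k)" where
  "lie n v w = (\<lambda>k. \<Sum>p\<in>nbasis n. \<Sum>q\<in>nbasis n. v p * w q * bb p q k)"

abbreviation ndim :: "(nb \<Rightarrow> 'k::field) set \<Rightarrow> nat" where
  "ndim S \<equiv> vector_space.dim (sc :: 'k \<Rightarrow> _) S"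

definition is_derivation :: "nat \<Rightarrow> ((nb \<Rightarrow> 'k::field) \<Rightarrow> (nb \<Rightarrow> 'k)) \<Rightarrow> bool" where
  "is_derivation n D \<longleftrightarrow>
     (\<forall>v\<in>nspace n. D v \<in> nspace n)
   \<and> (\<forall>v\<in>nspace n. \<forall>w\<in>nspace n. D (v + w) = D v + D w)
   \<and> (\<forall>c. \<forall>v\<in>nspace n. D (sc c v) = sc c (D v))
   \<and> (\<forall>v\<in>nspace n. \<forall>w\<in>nspace n. D (lie n v w) = lie n (D v) w + lie n v (D w))"

definition eigsp :: "nat \<Rightarrow> ((nb \<Rightarrow> 'k::field) \<Rightarrow> (nb \<Rightarrow> 'k)) \<Rightarrow> 'k \<Rightarrow> (nb \<Rightarrow> 'k) set" where
  "eigsp n D l = {v \<in> nspace n. D v = sc l v}"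

definition eigvals :: "nat \<Rightarrow> ((nb \<Rightarrow> 'k::field) \<Rightarrow> (nb \<Rightarrow> 'k)) \<Rightarrow> 'k set" where
  "eigvals n D = {l. \<exists>v\<in>nspace n. v \<noteq> 0 \<and> D v = sc l v}"

definition diagonalizable :: "nat \<Rightarrow> ((nb \<Rightarrow> 'k::field) \<Rightarrow> (nb \<Rightarrow> 'k)) \<Rightarrow> bool" where
  "diagonalizable n D \<longleftrightarrow>
     (\<exists>B \<subseteq> nspace n. \<not> module.dependent (sc :: 'k \<Rightarrow> _) B
        \<and> module.span (sc :: 'k \<Rightarrow> _) B = nspace n
        \<and> (\<forall>b\<in>B. \<exists>l. D b = sc l b))"

definition is_grading :: "nat \<Rightarrow> (nat \<Rightarrow> (nb \<Rightarrow> 'k::field) set) \<Rightarrow> bool" where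
  "is_grading n G \<longleftrightarrow>
     (\<forall>i\<in>{1,2,3}. module.subspace (sc :: 'k \<Rightarrow> _) (G i) \<and> G i \<subseteq> nspace n)
   \<and> (\<forall>v\<in>nspace n. \<exists>!t. fst t \<in> G 1 \<and> fst (snd t) \<in> G 2 \<and> snd (snd t) \<in> G 3
                          \<and> v = fst t + fst (snd t) + snd (snd t))
   \<and> (\<forall>i\<in>{1,2,3}. \<forall>j\<in>{1,2,3}. \<forall>x\<in>G i. \<forall>y\<in>G j.
        lie n x y \<in> (if i + j \<le> 3 then G (i + j) else {0}))"

end

theory Submission
  imports Defs
begin

text \<open>
  Let n = G1 + G2 + G3 be a grading and W = G2 + G3 (called upper below). Then G3 is central,
  W is abelian, [n, W] lies in G3 and [n, n] lies in W. If [v, w] lies in G3, the G1-components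
  of v and w commute, because their bracket lies in G2, and G2 and G3 meet only in 0. Applied to
  [b, u] = [b, y] = [x, y] = h, [u, y] = 0 and [x, u] = f this determines the W-components of u
  and y on the basis vectors e_i, a, b, x, u, y and shows that u and y lie in W. Since W commutes
  with c and u and [a, W] is central, W is spanned by all basis vectors except e_i, a, b, x.
  The vectors u_i, y_i, f, h are brackets with elements of W, so they lie in G3; conversely an
  element of G3 is central, hence has no u- and y-coordinates and is a combination of brackets
  of basis vectors, each of which lies in G2 + span {u_i, y_i, f, h}; as G2 and G3 meet only
  in 0, G3 = span {u_i, y_i, f, h}. Counting basis vectors gives the dimensions. The eigenspaces
  of a diagonalizable derivation with eigenvalues 1, 2, 3 form a grading.
\<close>

lemma (in vector_space) dim_sums_direct:
  assumes V: "subspace V" and W: "subspace W" and direct: "V \<inter> W \<subseteq> {0}"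
    and S: "finite S" "V \<subseteq> span S" "W \<subseteq> span S"
  shows "dim {x + y | x y. x \<in> V \<and> y \<in> W} = dim V + dim W"
proof -
  obtain BV where BV: "BV \<subseteq> V" "independent BV" "V \<subseteq> span BV" "card BV = dim V"
    by (rule basis_exists)
  obtain BW where BW: "BW \<subseteq> W" "independent BW" "W \<subseteq> span BW" "card BW = dim W"
    by (rule basis_exists)
  have fin: "finite BV" "finite BW"
    using independent_span_bound[OF S(1)] BV(1,2) BW(1,2) S(2,3) by blast+
  have span_BV: "span BV = V" and span_BW: "span BW = W"
    using span_subspace BV(1,3) BW(1,3) V W by auto
  have disj: "BV \<inter> BW = {}"
    using BV(1,2) BW(1,2) direct dependent_zero by blast
  have indep: "independent (BV \<union> BW)"
  proof (rule independent_if_scalars_zero)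
    show "finite (BV \<union> BW)" using fin by simp
    fix c x assume sum0: "(\<Sum>v\<in>BV \<union> BW. c v *s v) = 0" and x: "x \<in> BV \<union> BW"
    define u where "u = (\<Sum>v\<in>BV. c v *s v)"
    define w where "w = (\<Sum>v\<in>BW. c v *s v)"
    have "u + w = 0"
      using sum0 by (simp add: u_def w_def sum.union_disjoint[OF fin disj])
    moreover have "u \<in> V" "w \<in> W"
      unfolding u_def w_def using span_BV span_BW by (auto intro: span_sum span_scale span_base)
    ultimately have "u = 0" "w = 0"
      using direct subspace_neg[OF W] by (auto simp: add_eq_0_iff2)
    then show "c x = 0"
      using x BV(2) BW(2) fin by (auto simp: u_def w_def dependent_finite)
  qed
  moreover have span: "span (BV \<union> BW) = span {x + y | x y. x \<in> V \<and> y \<in> W}"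
  proof -
    have "span (BV \<union> BW) = {x + y | x y. x \<in> V \<and> y \<in> W}"
      using span_Un[of BV BW] unfolding span_BV span_BW .
    also have "\<dots> = span {x + y | x y. x \<in> V \<and> y \<in> W}"
      using span_eq_iff[THEN iffD2, OF subspace_sums[OF V W]] by (rule sym)
    finally show ?thesis .
  qed
  ultimately show ?thesis
    using dim_eq_card[OF span indep] card_Un_disjoint[OF fin disj] BV(4) BW(4) by simp
qed

section \<open>Coordinates\<close>

interpretation VS: vector_space "sc :: 'k::field \<Rightarrow> (nb \<Rightarrow> 'k) \<Rightarrow> _"
  by unfold_locales (auto simp: sc_def algebra_simps fun_eq_iff)

lemma sc_apply [simp]: "sc c v k = c * v k"
  by (simp add: sc_def)

lemma sum_fun_apply: "(\<Sum>x\<in>S. f x) k = (\<Sum>x\<in>S. f x k)"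
  by (induction S rule: infinite_finite_induct) auto

definition supported :: "nb set \<Rightarrow> (nb \<Rightarrow> 'k::field) set" where
  "supported K = {v. \<forall>k. k \<notin> K \<longrightarrow> v k = 0}"

lemma nspace_eq_supported: "nspace n = supported (nbasis n)"
  by (simp add: nspace_def supported_def)

lemma subspace_supported: "VS.subspace (supported K)"
  by (auto simp: VS.subspace_def supported_def)

lemma delta_in_supported: "k \<in> K \<Longrightarrow> delta k \<in> supported K"
  by (simp add: supported_def delta_def)

lemma subspace_nspace: "VS.subspace (nspace n)"
  by (simp add: nspace_eq_supported subspace_supported)

lemma delta_apply: "delta r k = (if k = r then 1 else 0)"
  by (simp add: delta_def)

lemma zero_in_nspace: "(0 :: nb \<Rightarrow> 'k::field) \<in> nspace n"
  by (simp add: nspace_def)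

lemma nspace_add: "v \<in> nspace n \<Longrightarrow> w \<in> nspace n \<Longrightarrow> v + w \<in> nspace n"
  by (simp add: nspace_def)

lemma delta_in_nspace: "k \<in> nbasis n \<Longrightarrow> delta k \<in> nspace n"
  by (simp add: nspace_eq_supported delta_in_supported)

lemma supported_expansion:
  assumes "finite K" "v \<in> supported K"
  shows "v = (\<Sum>k\<in>K. sc (v k) (delta k))"
proof
  fix j
  have "(\<Sum>k\<in>K. sc (v k) (delta k)) j = (\<Sum>k\<in>K. if j = k then v k else 0)"
    unfolding sum_fun_apply by (rule sum.cong) (auto simp: delta_def)
  also have "\<dots> = v j"
    using assms by (simp add: sum.delta' supported_def)
  finally show "v j = (\<Sum>k\<in>K. sc (v k) (delta k)) j" by simp
qed

lemma supported_in_subspace: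
  assumes S: "VS.subspace S" and "finite K" "v \<in> supported K"
    and deltas: "\<And>k. k \<in> K \<Longrightarrow> v k \<noteq> 0 \<Longrightarrow> delta k \<in> S"
  shows "v \<in> S"
proof -
  have "sc (v k) (delta k) \<in> S" if "k \<in> K" for k
    using deltas[OF that] VS.subspace_0[OF S] VS.subspace_scale[OF S]
    by (cases "v k = 0") (auto simp: sc_def zero_fun_def)
  then have "(\<Sum>k\<in>K. sc (v k) (delta k)) \<in> S"
    by (rule VS.subspace_sum[OF S])
  then show ?thesis
    using supported_expansion assms by metis
qed

lemma supported_subset_span: "finite K \<Longrightarrow> supported K \<subseteq> VS.span (delta ` K)"
  by (auto intro: supported_in_subspace VS.span_base)

lemma inj_delta: "inj delta"
  by (auto simp: inj_def delta_def fun_eq_iff split: if_splits)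

lemma independent_deltas:
  assumes "finite K"
  shows "\<not> VS.dependent (delta ` K :: (nb \<Rightarrow> 'k::field) set)"
proof (rule VS.independent_if_scalars_zero)
  show "finite (delta ` K)" using assms by simp
  fix c :: "(nb \<Rightarrow> 'k) \<Rightarrow> 'k" and x :: "nb \<Rightarrow> 'k"
  assume sum0: "(\<Sum>x\<in>delta ` K. sc (c x) x) = 0" and x: "x \<in> delta ` K"
  then obtain k where k: "k \<in> K" "x = delta k" by auto
  have "0 = (\<Sum>x\<in>delta ` K. sc (c x) x) k" using sum0 by simp
  also have "\<dots> = (\<Sum>j\<in>K. c (delta j) * delta j k)"
    by (simp add: sum.reindex inj_on_subset[OF inj_delta] sum_fun_apply)
  also have "\<dots> = c x"
    using k assms by (simp add: delta_def if_distrib cong: if_cong)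
  finally show "c x = 0" by simp
qed

lemma dim_supported: "finite K \<Longrightarrow> VS.dim (supported K) = card K"
  by (rule VS.dim_unique[of "delta ` K"])
    (auto simp: delta_in_supported supported_subset_span independent_deltas
      card_image inj_on_subset[OF inj_delta])

section \<open>The bracket of n(n) in coordinates\<close>

lemma finite_nbasis: "finite (nbasis n)"
proof -
  have "{EW i j | i j. 1 \<le> i \<and> i < j \<and> j \<le> n} \<subseteq> (\<lambda>(i, j). EW i j) ` ({1..n} \<times> {1..n})"
    by force
  then have "finite {EW i j | i j. 1 \<le> i \<and> i < j \<and> j \<le> n}"
    by (rule finite_subset) auto
  then show ?thesis
    unfolding nbasis_def by auto
qed

lemma nbasis_simps [simp]:
  "A \<in> nbasis n" "Bb \<in> nbasis n" "X \<in> nbasis n" "U \<in> nbasis n" "Y \<in> nbasis n"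
  "C \<in> nbasis n" "F \<in> nbasis n" "H \<in> nbasis n"
  "E i \<in> nbasis n \<longleftrightarrow> 1 \<le> i \<and> i \<le> n"
  "Xs i \<in> nbasis n \<longleftrightarrow> 1 \<le> i \<and> i \<le> n"
  "Us i \<in> nbasis n \<longleftrightarrow> 1 \<le> i \<and> i \<le> n"
  "Ys i \<in> nbasis n \<longleftrightarrow> 1 \<le> i \<and> i \<le> n"
  "EW i j \<in> nbasis n \<longleftrightarrow> 1 \<le> i \<and> i < j \<and> j \<le> n"
  by (auto simp: nbasis_def)

lemma posbr_asym: "posbr p q \<noteq> None \<Longrightarrow> posbr q p = None"
  by (cases p; cases q) auto

lemma bb_eq:
  "bb p q k = (if posbr p q = Some k then 1 else 0) - (if posbr q p = Some k then 1 else 0)"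
  using posbr_asym[of p q] by (auto simp: bb_def delta_def split: option.split)

definition bracket_pairs :: "nat \<Rightarrow> nb \<Rightarrow> (nb \<times> nb) set" where
  "bracket_pairs n k = {x \<in> nbasis n \<times> nbasis n. posbr (fst x) (snd x) = Some k}"

lemma lie_coord:
  "lie n v w k = (\<Sum>(p, q)\<in>bracket_pairs n k. v p * w q - v q * w p)"
proof -
  let ?S = "nbasis n"
  have fin: "finite (?S \<times> ?S)" using finite_nbasis by auto
  have pos: "(\<Sum>p\<in>?S. \<Sum>q\<in>?S. v p * w q * (if posbr p q = Some k then 1 else 0))
      = (\<Sum>(p, q)\<in>bracket_pairs n k. v p * w q)"
    unfolding bracket_pairs_def sum.cartesian_product
    by (simp add: sum.inter_filter[OF fin, symmetric] if_distrib case_prod_beta cong: if_cong)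
  have "(\<Sum>p\<in>?S. \<Sum>q\<in>?S. v p * w q * (if posbr q p = Some k then 1 else 0))
      = (\<Sum>q\<in>?S. \<Sum>p\<in>?S. v p * w q * (if posbr q p = Some k then 1 else 0))"
    by (rule sum.swap)
  also have "\<dots> = (\<Sum>(p, q)\<in>bracket_pairs n k. v q * w p)"
    unfolding bracket_pairs_def sum.cartesian_product
    by (simp add: sum.inter_filter[OF fin, symmetric] if_distrib case_prod_beta cong: if_cong)
  finally have neg: "(\<Sum>p\<in>?S. \<Sum>q\<in>?S. v p * w q * (if posbr q p = Some k then 1 else 0))
      = (\<Sum>(p, q)\<in>bracket_pairs n k. v q * w p)" .
  show ?thesis
    unfolding lie_def bb_eq right_diff_distrib sum_subtractf pos neg
    by (simp add: sum_subtractf case_prod_beta)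
qed

lemma bracket_pairs_simps:
  "bracket_pairs n H = {(A, C), (Bb, U), (Bb, Y), (X, Y)}"
  "bracket_pairs n F = {(A, Y), (X, U)}"
  "bracket_pairs n C = {(A, Bb)}"
  "1 \<le> i \<Longrightarrow> i \<le> n \<Longrightarrow> bracket_pairs n (Xs i) = {(E i, X)}"
  "1 \<le> i \<Longrightarrow> i \<le> n \<Longrightarrow> bracket_pairs n (Us i) = {(E i, U)}"
  "1 \<le> i \<Longrightarrow> i \<le> n \<Longrightarrow> bracket_pairs n (Ys i) = {(E i, Y)}"
  "1 \<le> i \<Longrightarrow> i < j \<Longrightarrow> j \<le> n \<Longrightarrow> bracket_pairs n (EW i j) = {(E i, E j)}"
  unfolding bracket_pairs_def
  by (auto; rename_tac p q; case_tac p; case_tac q; auto split: if_splits)+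

lemma bracket_pairs_empty:
  assumes "k \<in> {A, Bb, X, U, Y} \<or> (\<exists>i. k = E i) \<or> k \<notin> nbasis n"
  shows "bracket_pairs n k = {}"
proof -
  have "posbr p q \<noteq> Some k" if "p \<in> nbasis n" "q \<in> nbasis n" for p q
    using assms that by (cases p; cases q) (auto simp: nbasis_def split: if_splits)
  then show ?thesis by (auto simp: bracket_pairs_def)
qed

lemma lie_coord_simps:
  "lie n v w H = (v A * w C - v C * w A) + (v Bb * w U - v U * w Bb)
     + (v Bb * w Y - v Y * w Bb) + (v X * w Y - v Y * w X)"
  "lie n v w F = (v A * w Y - v Y * w A) + (v X * w U - v U * w X)"
  "lie n v w C = v A * w Bb - v Bb * w A"
  "1 \<le> i \<Longrightarrow> i \<le> n \<Longrightarrow> lie n v w (Xs i) = v (E i) * w X - v X * w (E i)"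
  "1 \<le> i \<Longrightarrow> i \<le> n \<Longrightarrow> lie n v w (Us i) = v (E i) * w U - v U * w (E i)"
  "1 \<le> i \<Longrightarrow> i \<le> n \<Longrightarrow> lie n v w (Ys i) = v (E i) * w Y - v Y * w (E i)"
  "1 \<le> i \<Longrightarrow> i < j \<Longrightarrow> j \<le> n \<Longrightarrow>
    lie n v w (EW i j) = v (E i) * w (E j) - v (E j) * w (E i)"
  by (simp_all add: lie_coord bracket_pairs_simps)

lemma lie_coord_zero:
  "k \<in> {A, Bb, X, U, Y} \<or> (\<exists>i. k = E i) \<or> k \<notin> nbasis n \<Longrightarrow> lie n v w k = 0"
  by (simp add: lie_coord bracket_pairs_empty)

lemma lie_in_nspace: "lie n v w \<in> nspace n"
  by (simp add: nspace_def lie_coord_zero)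

lemma lie_add_left: "lie n (v + v') w = lie n v w + lie n v' w"
  by (simp add: lie_def fun_eq_iff algebra_simps sum.distrib)

lemma lie_add_right: "lie n v (w + w') = lie n v w + lie n v w'"
  by (simp add: lie_def fun_eq_iff algebra_simps sum.distrib)

lemma lie_sc_left: "lie n (sc c v) w = sc c (lie n v w)"
  by (simp add: lie_def fun_eq_iff algebra_simps sum_distrib_left)

lemma lie_sc_right: "lie n v (sc c w) = sc c (lie n v w)"
  by (simp add: lie_def fun_eq_iff algebra_simps sum_distrib_left)

lemma lie_antisym: "lie n w v = - lie n v w"
  by (simp add: fun_eq_iff lie_coord sum_negf[symmetric] case_prod_beta algebra_simps)

lemma lie_delta:
  assumes "p \<in> nbasis n" "q \<in> nbasis n"
  shows "lie n (delta p) (delta q) = bb p q"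
proof
  fix k
  have "lie n (delta p) (delta q) k
      = (\<Sum>p'\<in>nbasis n.
          if p' = p then \<Sum>q'\<in>nbasis n. if q' = q then bb p' q' k else 0 else 0)"
    unfolding lie_def delta_def by (auto intro!: sum.cong)
  then show "lie n (delta p) (delta q) k = bb p q k"
    using assms finite_nbasis by (simp add: sum.delta')
qed

definition deg1_basis :: "nat \<Rightarrow> nb set" where
  "deg1_basis n = E ` {1..n} \<union> {A, Bb, X}"

definition deg2_basis :: "nat \<Rightarrow> nb set" where
  "deg2_basis n = {C, U, Y} \<union> {EW i j | i j. 1 \<le> i \<and> i < j \<and> j \<le> n} \<union> Xs ` {1..n}"

definition deg3_basis :: "nat \<Rightarrow> nb set" where
  "deg3_basis n = Us ` {1..n} \<union> Ys ` {1..n} \<union> {F, H}"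

lemma nbasis_degrees: "nbasis n = deg1_basis n \<union> deg2_basis n \<union> deg3_basis n"
  by (auto simp: nbasis_def deg1_basis_def deg2_basis_def deg3_basis_def)

lemma degree_bases_disjoint:
  "deg1_basis n \<inter> deg2_basis n = {}" "deg1_basis n \<inter> deg3_basis n = {}"
  "deg2_basis n \<inter> deg3_basis n = {}"
  by (auto simp: deg1_basis_def deg2_basis_def deg3_basis_def)

lemma finite_degree_bases:
  "finite (deg1_basis n)" "finite (deg2_basis n)" "finite (deg3_basis n)"
  using finite_nbasis[of n] unfolding nbasis_degrees by simp_all

lemma card_increasing_pairs:
  "card {(i, j). 1 \<le> i \<and> i < j \<and> j \<le> (n::nat)} = n * (n - 1) div 2"
proof (induction n)
  case 0
  have "{(i, j). 1 \<le> i \<and> i < j \<and> j \<le> (0::nat)} = {}" by auto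
  then show ?case by (simp only: card.empty)
next
  case (Suc n)
  have split: "{(i, j). 1 \<le> i \<and> i < j \<and> j \<le> Suc n}
      = {(i, j). 1 \<le> i \<and> i < j \<and> j \<le> n} \<union> (\<lambda>i. (i, Suc n)) ` {1..n}"
    by auto
  have "finite {(i, j). 1 \<le> i \<and> i < j \<and> j \<le> n}"
    by (rule finite_subset[of _ "{1..n} \<times> {1..n}"]) auto
  then have "card {(i, j). 1 \<le> i \<and> i < j \<and> j \<le> Suc n} = n * (n - 1) div 2 + n"
    unfolding split using Suc by (subst card_Un_disjoint) (auto simp: card_image inj_on_def)
  also have "\<dots> = Suc n * (Suc n - 1) div 2"
    by (cases n) (auto simp: algebra_simps)
  finally show ?case .
qed

lemma card_deg1_basis: "card (deg1_basis n) = n + 3"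
proof -
  have "card (E ` {1..n}) = n" by (simp add: card_image inj_on_def)
  then show ?thesis unfolding deg1_basis_def by (subst card_Un_disjoint) auto
qed

lemma card_deg2_basis: "card (deg2_basis n) = n * (n + 1) div 2 + 3"
proof -
  have "{EW i j | i j. 1 \<le> i \<and> i < j \<and> j \<le> n}
      = (\<lambda>(i, j). EW i j) ` {(i, j). 1 \<le> i \<and> i < j \<and> j \<le> n}"
    by auto
  then have "card {EW i j | i j. 1 \<le> i \<and> i < j \<and> j \<le> n} = n * (n - 1) div 2"
    using card_increasing_pairs by (simp add: card_image inj_on_def)
  moreover have "finite {EW i j | i j. 1 \<le> i \<and> i < j \<and> j \<le> n}"
    using finite_degree_bases(2)[of n] by (auto simp: deg2_basis_def)
  moreover have "n * (n + 1) div 2 = n * (n - 1) div 2 + n"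
    by (cases n) (auto simp: algebra_simps)
  ultimately show ?thesis
    unfolding deg2_basis_def
    by (subst card_Un_disjoint; auto simp: card_image inj_on_def)+
qed

lemma card_deg3_basis: "card (deg3_basis n) = 2 * n + 2"
  unfolding deg3_basis_def
  by (subst card_Un_disjoint; auto simp: card_image inj_on_def)+

lemma delta_brackets:
  "lie n (delta A) (delta Bb) = delta C" "lie n (delta A) (delta C) = delta H"
  "lie n (delta Bb) (delta U) = delta H" "lie n (delta Bb) (delta Y) = delta H"
  "lie n (delta X) (delta Y) = delta H" "lie n (delta A) (delta Y) = delta F"
  "lie n (delta X) (delta U) = delta F" "lie n (delta U) (delta Y) = 0"
  "1 \<le> i \<Longrightarrow> i \<le> n \<Longrightarrow> lie n (delta (E i)) (delta X) = delta (Xs i)"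
  "1 \<le> i \<Longrightarrow> i \<le> n \<Longrightarrow> lie n (delta (E i)) (delta U) = delta (Us i)"
  "1 \<le> i \<Longrightarrow> i \<le> n \<Longrightarrow> lie n (delta (E i)) (delta Y) = delta (Ys i)"
  "1 \<le> i \<Longrightarrow> i < j \<Longrightarrow> j \<le> n \<Longrightarrow> lie n (delta (E i)) (delta (E j)) = delta (EW i j)"
  by (simp_all add: lie_delta bb_def zero_fun_def)

lemma delta_eq_lie_deltas:
  assumes "k \<in> deg2_basis n \<union> deg3_basis n - {U, Y}"
  obtains p q where "p \<in> nbasis n" "q \<in> nbasis n" "delta k = lie n (delta p) (delta q)"
proof -
  consider "k = C" | "k = F" | "k = H"
    | i j where "1 \<le> i" "i < j" "j \<le> n" "k = EW i j"
    | i where "1 \<le> i" "i \<le> n" "k = Xs i \<or> k = Us i \<or> k = Ys i"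
    using assms by (auto simp: deg2_basis_def deg3_basis_def)
  then show ?thesis
  proof cases
    case 1 then show ?thesis using that[of A Bb] by (simp add: delta_brackets)
  next
    case 2 then show ?thesis using that[of A Y] by (simp add: delta_brackets)
  next
    case 3 then show ?thesis using that[of A C] by (simp add: delta_brackets)
  next
    case 4 then show ?thesis using that[of "E i" "E j"] by (simp add: delta_brackets)
  next
    case 5 then show ?thesis
      using that[of "E i" X] that[of "E i" U] that[of "E i" Y] by (auto simp: delta_brackets)
  qed
qed

lemma supported_derived_subset:
  fixes S :: "(nb \<Rightarrow> 'k::field) set"
  assumes S: "VS.subspace S"
    and brackets: "\<And>p q. p \<in> nbasis n \<Longrightarrow> q \<in> nbasis n \<Longrightarrow> lie n (delta p) (delta q) \<in> S"
  shows "supported (deg2_basis n \<union> deg3_basis n - {U, Y}) \<subseteq> S"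
proof
  fix v :: "nb \<Rightarrow> 'k" assume v: "v \<in> supported (deg2_basis n \<union> deg3_basis n - {U, Y})"
  show "v \<in> S"
  proof (rule supported_in_subspace[OF S _ v])
    show "finite (deg2_basis n \<union> deg3_basis n - {U, Y})"
      using finite_degree_bases by simp
    fix k assume "k \<in> deg2_basis n \<union> deg3_basis n - {U, Y}"
    then obtain p q where
      "p \<in> nbasis n" "q \<in> nbasis n" "delta k = (lie n (delta p) (delta q) :: nb \<Rightarrow> 'k)"
      by (rule delta_eq_lie_deltas)
    then show "delta k \<in> S"
      using brackets by simp
  qed
qed

section \<open>Gradings\<close>

locale grading =
  fixes n :: nat and G :: "nat \<Rightarrow> (nb \<Rightarrow> 'k::field) set"
  assumes is_grading: "is_grading n G"
begin

lemma subspace_G: "VS.subspace (G 1)" "VS.subspace (G 2)" "VS.subspace (G 3)"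
  using is_grading by (simp_all add: is_grading_def)

lemma G_subset_nspace: "G 1 \<subseteq> nspace n" "G 2 \<subseteq> nspace n" "G 3 \<subseteq> nspace n"
  using is_grading by (simp_all add: is_grading_def)

lemma zero_in_G: "0 \<in> G 1" "0 \<in> G 2" "0 \<in> G 3"
  using VS.subspace_0 subspace_G by auto

lemma grading_ex1:
  "v \<in> nspace n \<Longrightarrow> \<exists>!t. fst t \<in> G 1 \<and> fst (snd t) \<in> G 2 \<and> snd (snd t) \<in> G 3
      \<and> v = fst t + fst (snd t) + snd (snd t)"
  using is_grading[unfolded is_grading_def, THEN conjunct2, THEN conjunct1] by (rule bspec)

lemma grading_decomposition:
  assumes "v \<in> nspace n"
  obtains v1 v2 v3 where "v1 \<in> G 1" "v2 \<in> G 2" "v3 \<in> G 3" "v = v1 + v2 + v3"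
  using grading_ex1[OF assms] that by (meson ex1_implies_ex)

lemma grading_unique:
  assumes "v1 \<in> G 1" "v2 \<in> G 2" "v3 \<in> G 3" "w1 \<in> G 1" "w2 \<in> G 2" "w3 \<in> G 3"
    and "v1 + v2 + v3 = w1 + w2 + w3"
  shows "v1 = w1 \<and> v2 = w2 \<and> v3 = w3"
proof -
  have "v1 + v2 + v3 \<in> nspace n"
    using assms(1-3) G_subset_nspace by (blast intro: nspace_add)
  then have "(v1, v2, v3) = (w1, w2, w3)"
    using grading_ex1 assms by (metis fst_conv snd_conv)
  then show ?thesis by simp
qed

lemma lie_G:
  "i \<in> {1, 2, 3} \<Longrightarrow> j \<in> {1, 2, 3} \<Longrightarrow> x \<in> G i \<Longrightarrow> y \<in> G j \<Longrightarrow>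
    lie n x y \<in> (if i + j \<le> 3 then G (i + j) else {0})"
  using is_grading[unfolded is_grading_def, THEN conjunct2, THEN conjunct2] by blast

lemma lie_G1_G1: "x \<in> G 1 \<Longrightarrow> y \<in> G 1 \<Longrightarrow> lie n x y \<in> G 2"
  using lie_G[of 1 1 x y] by (simp add: eval_nat_numeral)

lemma lie_G1_G2: "x \<in> G 1 \<Longrightarrow> y \<in> G 2 \<Longrightarrow> lie n x y \<in> G 3"
  using lie_G[of 1 2 x y] by (simp add: eval_nat_numeral)

lemma lie_G2_G2: "x \<in> G 2 \<Longrightarrow> y \<in> G 2 \<Longrightarrow> lie n x y = 0"
  using lie_G[of 2 2 x y] by simp

lemma lie_G2_G3: "x \<in> G 2 \<Longrightarrow> y \<in> G 3 \<Longrightarrow> lie n x y = 0"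
  using lie_G[of 2 3 x y] by simp

lemma G3_central:
  assumes "x \<in> G 3" "w \<in> nspace n"
  shows "lie n x w = 0"
proof -
  obtain w1 w2 w3 where "w1 \<in> G 1" "w2 \<in> G 2" "w3 \<in> G 3" "w = w1 + w2 + w3"
    using grading_decomposition[OF assms(2)] .
  then show ?thesis
    using lie_G[of 3 1 x w1] lie_G[of 3 2 x w2] lie_G[of 3 3 x w3] assms(1)
    by (simp add: lie_add_right)
qed

lemma G2_inter_G3: "x \<in> G 2 \<Longrightarrow> x \<in> G 3 \<Longrightarrow> x = 0"
  using grading_unique[of 0 x 0 0 0 x] zero_in_G by simp

definition upper :: "(nb \<Rightarrow> 'k) set" where
  "upper = {x + y | x y. x \<in> G 2 \<and> y \<in> G 3}"

lemma subspace_upper: "VS.subspace upper"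
  unfolding upper_def using VS.subspace_sums subspace_G by blast

lemma upper_subset_nspace: "upper \<subseteq> nspace n"
  unfolding upper_def using G_subset_nspace by (blast intro: nspace_add)

lemma G2_subset_upper: "G 2 \<subseteq> upper"
  unfolding upper_def using zero_in_G(3)
  by (metis (mono_tags, lifting) CollectI add_0_right subsetI)

lemma G3_subset_upper: "G 3 \<subseteq> upper"
  unfolding upper_def using zero_in_G(2)
  by (metis (mono_tags, lifting) CollectI add_0_left subsetI)

lemma G1_inter_upper:
  assumes "x \<in> G 1" "x \<in> upper"
  shows "x = 0"
proof -
  obtain y z where "y \<in> G 2" "z \<in> G 3" "x = y + z"
    using assms(2) unfolding upper_def by blast
  then show ?thesis
    using grading_unique[of x 0 0 0 y z] assms(1) zero_in_G by simp
qed

lemma nspace_eq_G1_plus_upper: "nspace n = {x + y | x y. x \<in> G 1 \<and> y \<in> upper}"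
proof
  show "nspace n \<subseteq> {x + y | x y. x \<in> G 1 \<and> y \<in> upper}"
  proof
    fix v :: "nb \<Rightarrow> 'k" assume "v \<in> nspace n"
    then obtain v1 v2 v3 where "v1 \<in> G 1" "v2 \<in> G 2" "v3 \<in> G 3" "v = v1 + v2 + v3"
      by (rule grading_decomposition)
    then show "v \<in> {x + y | x y. x \<in> G 1 \<and> y \<in> upper}"
      unfolding upper_def by (auto simp: add.assoc)
  qed
  show "{x + y | x y. x \<in> G 1 \<and> y \<in> upper} \<subseteq> nspace n"
    using G_subset_nspace upper_subset_nspace by (blast intro: nspace_add)
qed

lemma upper_abelian:
  assumes "v \<in> upper" "w \<in> upper"
  shows "lie n v w = 0"
proof -
  obtain v2 v3 where v: "v2 \<in> G 2" "v3 \<in> G 3" "v = v2 + v3"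
    using assms(1) unfolding upper_def by blast
  obtain w2 w3 where w: "w2 \<in> G 2" "w3 \<in> G 3" "w = w2 + w3"
    using assms(2) unfolding upper_def by blast
  have "lie n v3 w = 0"
    using G3_central v(2) assms(2) upper_subset_nspace by blast
  then show ?thesis
    using lie_G2_G2[OF v(1) w(1)] lie_G2_G3[OF v(1) w(2)] v(3) w(3)
    by (simp add: lie_add_left lie_add_right)
qed

lemma lie_upper_right:
  assumes "v \<in> nspace n" "w \<in> upper"
  shows "lie n v w \<in> G 3"
proof -
  obtain v1 v2 v3 where v: "v1 \<in> G 1" "v2 \<in> G 2" "v3 \<in> G 3" "v = v1 + v2 + v3"
    using grading_decomposition[OF assms(1)] .
  obtain w2 w3 where w: "w2 \<in> G 2" "w3 \<in> G 3" "w = w2 + w3"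
    using assms(2) unfolding upper_def by blast
  have "lie n (v2 + v3) w = 0"
    using upper_abelian assms(2) v(2,3) unfolding upper_def by blast
  moreover have "lie n v1 w3 = 0"
    using G3_central[OF w(2)] v(1) G_subset_nspace lie_antisym[of n v1 w3] by auto
  ultimately have "lie n v w = lie n v1 w2"
    using v(4) w(3) by (simp add: lie_add_left lie_add_right add.assoc)
  then show ?thesis
    using lie_G1_G2[OF v(1) w(1)] by simp
qed

lemma lie_upper_left: "w \<in> upper \<Longrightarrow> v \<in> nspace n \<Longrightarrow> lie n w v \<in> G 3"
  using lie_upper_right lie_antisym[of n w v] VS.subspace_neg[OF subspace_G(3)] by simp

lemma lie_in_upper:
  assumes "v \<in> nspace n" "w \<in> nspace n"
  shows "lie n v w \<in> upper"
proof -
  obtain v1 v' where v: "v1 \<in> G 1" "v' \<in> upper" "v = v1 + v'"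
    using assms(1) nspace_eq_G1_plus_upper by blast
  obtain w1 w' where w: "w1 \<in> G 1" "w' \<in> upper" "w = w1 + w'"
    using assms(2) nspace_eq_G1_plus_upper by blast
  have v1w1: "lie n v1 w1 \<in> upper"
    using lie_G1_G1[OF v(1) w(1)] G2_subset_upper by blast
  have "lie n v1 w' + lie n v' w \<in> G 3"
    using lie_upper_right[of v1 w'] lie_upper_left[of v' w] v w assms(2) G_subset_nspace
      VS.subspace_add[OF subspace_G(3)] by blast
  then have "lie n v1 w' + lie n v' w \<in> upper"
    using G3_subset_upper by blast
  moreover have "lie n v w = lie n v1 w1 + (lie n v1 w' + lie n v' w)"
    using v(3) w(3) by (simp add: lie_add_left lie_add_right add.assoc)
  ultimately show ?thesis
    using v1w1 VS.subspace_add[OF subspace_upper] by simp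
qed

definition upper_part :: "(nb \<Rightarrow> 'k) \<Rightarrow> (nb \<Rightarrow> 'k)" where
  "upper_part v = (THE w. w \<in> upper \<and> v - w \<in> G 1)"

lemma upper_part:
  assumes "v \<in> nspace n"
  shows "upper_part v \<in> upper" "v - upper_part v \<in> G 1"
proof -
  obtain v1 w where w: "v1 \<in> G 1" "w \<in> upper" "v = v1 + w"
    using assms nspace_eq_G1_plus_upper by blast
  have "\<exists>!w. w \<in> upper \<and> v - w \<in> G 1"
  proof (rule ex1I[of _ w])
    show "w \<in> upper \<and> v - w \<in> G 1" using w by simp
    fix w' assume w': "w' \<in> upper \<and> v - w' \<in> G 1"
    have "w - w' = (v - w') - v1" using w(3) by simp
    then have "w - w' \<in> G 1"
      using w' w(1) VS.subspace_diff[OF subspace_G(1)] by metis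
    moreover have "w - w' \<in> upper"
      using w' w VS.subspace_diff[OF subspace_upper] by blast
    ultimately show "w' = w"
      using G1_inter_upper by fastforce
  qed
  then show "upper_part v \<in> upper" "v - upper_part v \<in> G 1"
    unfolding upper_part_def by (metis (mono_tags, lifting) theI')+
qed

lemma lie_eq_upper_parts:
  assumes "v \<in> nspace n" "w \<in> nspace n" "lie n v w \<in> G 3"
  shows "lie n v w = lie n v (upper_part w) + lie n (upper_part v) w"
proof -
  define v' w' where "v' = upper_part v" and "w' = upper_part w"
  define v1 w1 where "v1 = v - v'" and "w1 = w - w'"
  have parts: "v1 \<in> G 1" "w1 \<in> G 1" "v' \<in> upper" "w' \<in> upper"
    using upper_part assms(1,2) by (simp_all add: v1_def w1_def v'_def w'_def)
  have vw: "v = v1 + v'" "w = w1 + w'"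
    by (simp_all add: v1_def w1_def)
  have split: "lie n v w = lie n v1 w1 + (lie n v w' + lie n v' w)"
    using upper_abelian[of v' w'] parts unfolding vw
    by (simp add: lie_add_left lie_add_right algebra_simps)
  have "lie n v w' + lie n v' w \<in> G 3"
    using lie_upper_right lie_upper_left assms parts VS.subspace_add[OF subspace_G(3)] by blast
  then have "lie n v1 w1 \<in> G 3"
    using split assms(3) VS.subspace_diff[OF subspace_G(3)] by (metis add_diff_cancel_right')
  then have "lie n v1 w1 = 0"
    using G2_inter_G3 lie_G1_G1[OF parts(1,2)] by blast
  then show ?thesis
    using split by (simp add: v'_def w'_def)
qed

lemma delta_C_in_upper: "delta C \<in> upper"
  using lie_in_upper[of "delta A" "delta Bb"] by (simp add: delta_in_nspace delta_brackets)

lemma delta_H_in_G3: "delta H \<in> G 3"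
  using lie_upper_right[OF _ delta_C_in_upper, of "delta A"]
  by (simp add: delta_in_nspace delta_brackets)

text \<open>An element of the abelian ideal upper commutes with c, and its bracket with a is central.\<close>
lemma upper_coords_A_Bb:
  assumes "w \<in> upper"
  shows "w A = 0" "w Bb = 0"
proof -
  have "lie n w (delta C) H = 0"
    using upper_abelian[OF assms delta_C_in_upper] by simp
  then show wA: "w A = 0"
    by (simp add: lie_coord_simps delta_apply)
  have "lie n (lie n (delta A) w) (delta A) = 0"
    using G3_central lie_upper_right assms upper_subset_nspace by (simp add: delta_in_nspace)
  then have "lie n (lie n (delta A) w) (delta A) H = 0"
    by simp
  then have "lie n (delta A) w C = 0"
    by (simp add: lie_coord_simps delta_apply)
  then show "w Bb = 0"
    using wA by (simp add: lie_coord_simps delta_apply)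
qed

lemma supported_subset_upper: "supported (deg2_basis n \<union> deg3_basis n - {U, Y}) \<subseteq> upper"
  using supported_derived_subset[OF subspace_upper] lie_in_upper delta_in_nspace by blast

lemma in_upper_if_low_coords_agree:
  assumes v: "v \<in> nspace n"
    and agree: "\<And>k. k \<in> deg1_basis n \<union> {U, Y} \<Longrightarrow> upper_part v k = v k"
  shows "v \<in> upper"
proof -
  have "upper_part v \<in> nspace n"
    using upper_part(1)[OF v] upper_subset_nspace by blast
  then have "v k = upper_part v k" if "k \<notin> deg2_basis n \<union> deg3_basis n - {U, Y}" for k
    using that v agree[of k] by (cases "k \<in> nbasis n") (auto simp: nspace_def nbasis_degrees)
  then have "v - upper_part v \<in> supported (deg2_basis n \<union> deg3_basis n - {U, Y})"
    by (simp add: supported_def)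
  then have "v - upper_part v = 0"
    using G1_inter_upper upper_part(2)[OF v] supported_subset_upper by blast
  then show ?thesis
    using upper_part(1)[OF v] by simp
qed

lemma upper_part_delta_A_Bb:
  "k \<in> nbasis n \<Longrightarrow> upper_part (delta k) A = 0"
  "k \<in> nbasis n \<Longrightarrow> upper_part (delta k) Bb = 0"
  using upper_coords_A_Bb upper_part(1) delta_in_nspace by blast+

lemma lie_deltas_eq_upper_parts:
  assumes "p \<in> nbasis n" "q \<in> nbasis n" "lie n (delta p) (delta q) \<in> G 3"
  shows "lie n (delta p) (delta q)
    = lie n (delta p) (upper_part (delta q)) + lie n (upper_part (delta p)) (delta q)"
  using lie_eq_upper_parts assms delta_in_nspace by blast

lemma upper_part_delta_Y_coords:
  "upper_part (delta Y) U = 0" "upper_part (delta Y) Y = 1" "upper_part (delta Y) X = 0"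
  "1 \<le> i \<Longrightarrow> i \<le> n \<Longrightarrow> upper_part (delta Y) (E i) = 0"
proof -
  let ?b = "upper_part (delta Bb)" and ?x = "upper_part (delta X)"
    and ?u = "upper_part (delta U)" and ?y = "upper_part (delta Y)"
  note low = upper_part_delta_A_Bb[of Bb] upper_part_delta_A_Bb[of X]
    upper_part_delta_A_Bb[of U] upper_part_delta_A_Bb[of Y]
  have BU: "delta H = lie n (delta Bb) ?u + lie n ?b (delta U)"
    using lie_deltas_eq_upper_parts[of Bb U] delta_H_in_G3 by (simp add: delta_brackets)
  have BY: "delta H = lie n (delta Bb) ?y + lie n ?b (delta Y)"
    using lie_deltas_eq_upper_parts[of Bb Y] delta_H_in_G3 by (simp add: delta_brackets)
  have XY: "delta H = lie n (delta X) ?y + lie n ?x (delta Y)"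
    using lie_deltas_eq_upper_parts[of X Y] delta_H_in_G3 by (simp add: delta_brackets)
  have UY: "0 = lie n (delta U) ?y + lie n ?u (delta Y)"
    using lie_deltas_eq_upper_parts[of U Y] zero_in_G by (simp add: delta_brackets)
  have "?b X = 0"
    using fun_cong[OF BU, of F] low by (simp add: lie_coord_simps delta_apply)
  then have "?y U + ?y Y = 1"
    using fun_cong[OF BY, of H] low by (simp add: lie_coord_simps delta_apply)
  moreover show "?y U = 0"
    using fun_cong[OF XY, of F] low by (simp add: lie_coord_simps delta_apply)
  ultimately show "?y Y = 1" by simp
  show "?y X = 0"
    using fun_cong[OF UY, of F] low by (simp add: lie_coord_simps delta_apply)
  show "1 \<le> i \<Longrightarrow> i \<le> n \<Longrightarrow> ?y (E i) = 0"
    using fun_cong[OF XY, of "Xs i"] by (simp add: lie_coord_simps delta_apply)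
qed

lemma upper_part_delta_U_coords:
  "upper_part (delta U) X = 0" "1 \<le> i \<Longrightarrow> i \<le> n \<Longrightarrow> upper_part (delta U) (E i) = 0"
proof -
  have UY: "0 = lie n (delta U) (upper_part (delta Y)) + lie n (upper_part (delta U)) (delta Y)"
    using lie_deltas_eq_upper_parts[of U Y] zero_in_G by (simp add: delta_brackets)
  show "upper_part (delta U) X = 0"
    using fun_cong[OF UY, of H] upper_part_delta_A_Bb[of U] upper_part_delta_A_Bb[of Y]
    by (simp add: lie_coord_simps delta_apply)
  show "1 \<le> i \<Longrightarrow> i \<le> n \<Longrightarrow> upper_part (delta U) (E i) = 0"
    using fun_cong[OF UY, of "Ys i"] by (simp add: lie_coord_simps delta_apply)
qed

lemma upper_part_delta_X_coord: "upper_part (delta X) X = 0"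
proof -
  have XY: "delta H
      = lie n (delta X) (upper_part (delta Y)) + lie n (upper_part (delta X)) (delta Y)"
    using lie_deltas_eq_upper_parts[of X Y] delta_H_in_G3 by (simp add: delta_brackets)
  show ?thesis
    using fun_cong[OF XY, of H] upper_part_delta_Y_coords upper_part_delta_A_Bb[of X]
    by (simp add: lie_coord_simps delta_apply)
qed

lemma delta_Y_in_upper: "delta Y \<in> upper"
  by (rule in_upper_if_low_coords_agree[OF delta_in_nspace])
    (auto simp: delta_in_nspace deg1_basis_def upper_part_delta_Y_coords upper_part_delta_A_Bb
      delta_apply)

lemma delta_U_in_upper: "delta U \<in> upper"
proof -
  have "delta F \<in> G 3"
    using lie_upper_right[OF _ delta_Y_in_upper, of "delta A"]
    by (simp add: delta_in_nspace delta_brackets)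
  then have XU: "delta F
      = lie n (delta X) (upper_part (delta U)) + lie n (upper_part (delta X)) (delta U)"
    using lie_deltas_eq_upper_parts[of X U] by (simp add: delta_brackets)
  have "upper_part (delta U) U = 1" "upper_part (delta U) Y = 0"
    using fun_cong[OF XU, of F] fun_cong[OF XU, of H] upper_part_delta_X_coord
      upper_part_delta_A_Bb[of X] upper_part_delta_A_Bb[of U]
    by (simp_all add: lie_coord_simps delta_apply)
  then show ?thesis
    by (intro in_upper_if_low_coords_agree[OF delta_in_nspace])
      (auto simp: delta_in_nspace deg1_basis_def upper_part_delta_U_coords upper_part_delta_A_Bb
        delta_apply)
qed

lemma upper_deg1_coords:
  assumes w: "w \<in> upper" and k: "k \<in> deg1_basis n"
  shows "w k = 0"
proof -
  have commute_U: "lie n w (delta U) = 0"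
    using upper_abelian[OF w delta_U_in_upper] .
  have "w X = 0"
    using fun_cong[OF commute_U, of F] upper_coords_A_Bb[OF w]
    by (simp add: lie_coord_simps delta_apply)
  moreover have "w (E i) = 0" if "1 \<le> i" "i \<le> n" for i
    using fun_cong[OF commute_U, of "Us i"] that by (simp add: lie_coord_simps delta_apply)
  ultimately show ?thesis
    using k upper_coords_A_Bb[OF w] by (auto simp: deg1_basis_def)
qed

lemma upper_eq_supported: "upper = supported (deg2_basis n \<union> deg3_basis n)"
proof
  show "upper \<subseteq> supported (deg2_basis n \<union> deg3_basis n)"
  proof
    fix w assume w: "w \<in> upper"
    have "w k = 0" if "k \<notin> deg2_basis n \<union> deg3_basis n" for k
    proof (cases "k \<in> deg1_basis n")
      case True
      then show ?thesis by (rule upper_deg1_coords[OF w])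
    next
      case False
      then have "k \<notin> nbasis n"
        using that by (simp add: nbasis_degrees)
      then show ?thesis
        using w upper_subset_nspace by (auto simp: nspace_def)
    qed
    then show "w \<in> supported (deg2_basis n \<union> deg3_basis n)"
      by (simp add: supported_def)
  qed
  show "supported (deg2_basis n \<union> deg3_basis n) \<subseteq> upper"
  proof
    fix v :: "nb \<Rightarrow> 'k" assume v: "v \<in> supported (deg2_basis n \<union> deg3_basis n)"
    show "v \<in> upper"
    proof (rule supported_in_subspace[OF subspace_upper _ v])
      show "finite (deg2_basis n \<union> deg3_basis n)"
        using finite_degree_bases by simp
      fix k assume "k \<in> deg2_basis n \<union> deg3_basis n"
      then show "delta k \<in> upper"
        using delta_U_in_upper delta_Y_in_upper
          supported_subset_upper delta_in_supported[of k "deg2_basis n \<union> deg3_basis n - {U, Y}"]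
        by (cases "k \<in> {U, Y}") auto
    qed
  qed
qed

lemma lie_upper_supported:
  assumes "w \<in> upper"
  shows "lie n v w \<in> supported (deg3_basis n)" "lie n w v \<in> supported (deg3_basis n)"
proof -
  have w: "w (E i) = 0" "w A = 0" "w Bb = 0" "w X = 0" for i
    using assms unfolding upper_eq_supported supported_def deg1_basis_def nbasis_degrees
    by (auto simp: deg2_basis_def deg3_basis_def)
  have "lie n v w k = 0 \<and> lie n w v k = 0" if "k \<notin> deg3_basis n" for k
  proof (cases "k \<in> deg2_basis n - {U, Y}")
    case True
    then consider "k = C" | i j where "1 \<le> i" "i < j" "j \<le> n" "k = EW i j"
      | i where "1 \<le> i" "i \<le> n" "k = Xs i"
      by (auto simp: deg2_basis_def)
    then show ?thesis
      by cases (simp_all add: lie_coord_simps w)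
  next
    case False
    then have "k \<in> {A, Bb, X, U, Y} \<or> (\<exists>i. k = E i) \<or> k \<notin> nbasis n"
      using that by (auto simp: nbasis_degrees deg1_basis_def)
    then show ?thesis
      by (simp add: lie_coord_zero)
  qed
  then show "lie n v w \<in> supported (deg3_basis n)" "lie n w v \<in> supported (deg3_basis n)"
    by (auto simp: supported_def)
qed

lemma supported_deg3_subset_G3: "supported (deg3_basis n) \<subseteq> G 3"
proof
  fix v :: "nb \<Rightarrow> 'k" assume v: "v \<in> supported (deg3_basis n)"
  show "v \<in> G 3"
  proof (rule supported_in_subspace[OF subspace_G(3) _ v])
    show "finite (deg3_basis n)"
      using finite_degree_bases by simp
    fix k assume "k \<in> deg3_basis n"
    then consider i where "1 \<le> i" "i \<le> n" "k = Us i \<or> k = Ys i" | "k = F" | "k = H"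
      by (auto simp: deg3_basis_def)
    then show "delta k \<in> G 3"
    proof cases
      case 1
      then show ?thesis
        using lie_upper_right[OF delta_in_nspace delta_U_in_upper, of "E i"]
          lie_upper_right[OF delta_in_nspace delta_Y_in_upper, of "E i"]
        by (auto simp: delta_brackets)
    next
      case 2
      then show ?thesis
        using lie_upper_right[OF delta_in_nspace delta_Y_in_upper, of A]
        by (simp add: delta_brackets)
    next
      case 3
      then show ?thesis
        using delta_H_in_G3 by simp
    qed
  qed
qed

lemma lie_in_G2_plus_deg3:
  assumes "v \<in> nspace n" "w \<in> nspace n"
  shows "lie n v w \<in> {p + t | p t. p \<in> G 2 \<and> t \<in> supported (deg3_basis n)}"
proof -
  obtain v1 v' where v: "v1 \<in> G 1" "v' \<in> upper" "v = v1 + v'"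
    using assms(1) nspace_eq_G1_plus_upper by blast
  obtain w1 w' where w: "w1 \<in> G 1" "w' \<in> upper" "w = w1 + w'"
    using assms(2) nspace_eq_G1_plus_upper by blast
  have "lie n v w = lie n v1 w1 + (lie n v1 w' + lie n v' w)"
    using v(3) w(3) by (simp add: lie_add_left lie_add_right add.assoc)
  moreover have "lie n v1 w' + lie n v' w \<in> supported (deg3_basis n)"
    using lie_upper_supported v(2) w(2) VS.subspace_add[OF subspace_supported] by blast
  ultimately show ?thesis
    using lie_G1_G1[OF v(1) w(1)] by blast
qed

lemma G3_eq_supported: "G 3 = supported (deg3_basis n)"
proof
  show "G 3 \<subseteq> supported (deg3_basis n)"
  proof
    fix v assume v: "v \<in> G 3"
    have central: "lie n v (delta A) = 0" "lie n v (delta Bb) = 0"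
      using G3_central[OF v] by (simp_all add: delta_in_nspace)
    have low: "v A = 0" "v Bb = 0"
      using upper_coords_A_Bb G3_subset_upper v by blast+
    have "v Y = 0"
      using fun_cong[OF central(1), of F] low by (simp add: lie_coord_simps delta_apply)
    have "v U = 0"
      using fun_cong[OF central(2), of H] low \<open>v Y = 0\<close>
      by (simp add: lie_coord_simps delta_apply)
    then have "v \<in> supported (deg2_basis n \<union> deg3_basis n - {U, Y})"
      using \<open>v Y = 0\<close> v G3_subset_upper upper_eq_supported by (auto simp: supported_def)
    moreover have "supported (deg2_basis n \<union> deg3_basis n - {U, Y})
        \<subseteq> {p + t | p t. p \<in> G 2 \<and> t \<in> supported (deg3_basis n)}"
      using supported_derived_subset[OF VS.subspace_sums[OF subspace_G(2) subspace_supported]]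
        lie_in_G2_plus_deg3 delta_in_nspace by blast
    ultimately obtain p t where pt: "p \<in> G 2" "t \<in> supported (deg3_basis n)" "v = p + t"
      by blast
    then have "p \<in> G 3"
      using v supported_deg3_subset_G3 VS.subspace_diff[OF subspace_G(3)]
      by (metis add_diff_cancel_right' subsetD)
    then have "p = 0"
      using G2_inter_G3 pt(1) by blast
    then show "v \<in> supported (deg3_basis n)"
      using pt by simp
  qed
  show "supported (deg3_basis n) \<subseteq> G 3"
    by (rule supported_deg3_subset_G3)
qed

lemma dim_G:
  "VS.dim (G 1) = n + 3" "VS.dim (G 2) = n * (n + 1) div 2 + 3" "VS.dim (G 3) = 2 * n + 2"
proof -
  let ?span = "VS.span (delta ` nbasis n)"
  have fin: "finite (delta ` nbasis n)"
    using finite_nbasis by simp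
  have in_span: "(nspace n :: (nb \<Rightarrow> 'k) set) \<subseteq> ?span"
    using supported_subset_span[OF finite_nbasis] by (simp add: nspace_eq_supported)
  have card_nbasis:
    "card (nbasis n) = card (deg1_basis n) + card (deg2_basis n) + card (deg3_basis n)"
    unfolding nbasis_degrees using finite_degree_bases degree_bases_disjoint
    by (simp add: card_Un_disjoint Int_Un_distrib2)
  have "VS.dim (nspace n :: (nb \<Rightarrow> 'k) set) = VS.dim (G 1) + VS.dim upper"
    unfolding nspace_eq_G1_plus_upper
    by (rule VS.dim_sums_direct[OF subspace_G(1) subspace_upper _ fin])
      (use G1_inter_upper G_subset_nspace(1) upper_subset_nspace in_span in auto)
  moreover have "VS.dim (nspace n :: (nb \<Rightarrow> 'k) set) = card (nbasis n)"
    by (simp add: nspace_eq_supported dim_supported finite_nbasis)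
  moreover have "VS.dim upper = card (deg2_basis n) + card (deg3_basis n)"
    using finite_degree_bases degree_bases_disjoint
    by (simp add: upper_eq_supported dim_supported card_Un_disjoint)
  moreover have "VS.dim upper = VS.dim (G 2) + VS.dim (G 3)"
    unfolding upper_def
    by (rule VS.dim_sums_direct[OF subspace_G(2) subspace_G(3) _ fin])
      (use G2_inter_G3 G_subset_nspace(2,3) in_span in auto)
  moreover show "VS.dim (G 3) = 2 * n + 2"
    using dim_supported[OF finite_degree_bases(3)] G3_eq_supported card_deg3_basis by simp
  ultimately show "VS.dim (G 1) = n + 3" "VS.dim (G 2) = n * (n + 1) div 2 + 3"
    using card_nbasis card_deg1_basis[of n] card_deg2_basis[of n] card_deg3_basis[of n]
    by linarith+
qed

end

section \<open>Diagonalizable derivations\<close>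

lemma vandermonde_123_zero:
  fixes a b c :: "'k::field_char_0"
  assumes "a + b + c = 0" "a + 2 * b + 3 * c = 0" "a + 4 * b + 9 * c = 0"
  shows "a = 0 \<and> b = 0 \<and> c = 0"
proof -
  have "2 * c = 2 * (a + b + c) - 3 * (a + 2 * b + 3 * c) + (a + 4 * b + 9 * c)"
    by (simp add: algebra_simps)
  then have c: "c = 0"
    unfolding assms by simp
  have "b + 2 * c = (a + 2 * b + 3 * c) - (a + b + c)"
    by (simp add: algebra_simps)
  then have "b = 0"
    unfolding assms using c by simp
  then show ?thesis
    using assms c by simp
qed

context
  fixes n :: nat and D :: "(nb \<Rightarrow> 'k::field) \<Rightarrow> (nb \<Rightarrow> 'k)"
  assumes derivation: "is_derivation n D"
begin

lemma derivation_add: "v \<in> nspace n \<Longrightarrow> w \<in> nspace n \<Longrightarrow> D (v + w) = D v + D w"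
  using derivation by (simp add: is_derivation_def)

lemma derivation_sc: "v \<in> nspace n \<Longrightarrow> D (sc c v) = sc c (D v)"
  using derivation by (simp add: is_derivation_def)

lemma derivation_lie:
  "v \<in> nspace n \<Longrightarrow> w \<in> nspace n \<Longrightarrow> D (lie n v w) = lie n (D v) w + lie n v (D w)"
  using derivation by (simp add: is_derivation_def)

lemma derivation_zero: "D 0 = 0"
  using derivation_add[of 0 0] by (simp add: zero_in_nspace)

lemma subspace_eigsp: "VS.subspace (eigsp n D l)"
  unfolding VS.subspace_def eigsp_def
  by (auto simp: zero_in_nspace derivation_zero derivation_add derivation_sc nspace_add
      VS.subspace_scale[OF subspace_nspace] fun_eq_iff algebra_simps)

lemma lie_eigsp:
  assumes "x \<in> eigsp n D l" "y \<in> eigsp n D m"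
  shows "lie n x y \<in> eigsp n D (l + m)"
proof -
  have "D (lie n x y) = lie n (sc l x) y + lie n x (sc m y)"
    using derivation_lie assms by (simp add: eigsp_def)
  then have "D (lie n x y) = sc (l + m) (lie n x y)"
    by (simp add: lie_sc_left lie_sc_right fun_eq_iff algebra_simps)
  then show ?thesis
    by (simp add: eigsp_def lie_in_nspace)
qed

end

lemma eigsp_123_unique:
  fixes D :: "(nb \<Rightarrow> 'k::field_char_0) \<Rightarrow> (nb \<Rightarrow> 'k)"
  assumes derivation: "is_derivation n D"
    and x: "x1 \<in> eigsp n D 1" "x2 \<in> eigsp n D 2" "x3 \<in> eigsp n D 3"
    and y: "y1 \<in> eigsp n D 1" "y2 \<in> eigsp n D 2" "y3 \<in> eigsp n D 3"
    and eq: "x1 + x2 + x3 = y1 + y2 + y3"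
  shows "x1 = y1 \<and> x2 = y2 \<and> x3 = y3"
proof -
  define d1 d2 d3 where "d1 = x1 - y1" and "d2 = x2 - y2" and "d3 = x3 - y3"
  have d: "d1 \<in> eigsp n D 1" "d2 \<in> eigsp n D 2" "d3 \<in> eigsp n D 3"
    unfolding d1_def d2_def d3_def
    using x y VS.subspace_diff[OF subspace_eigsp[OF derivation]] by blast+
  then have N: "d1 \<in> nspace n" "d2 \<in> nspace n" "d3 \<in> nspace n"
    and Dd: "D d1 = sc 1 d1" "D d2 = sc 2 d2" "D d3 = sc 3 d3"
    by (simp_all add: eigsp_def)
  have s0: "d1 + d2 + d3 = 0"
    using eq by (simp add: d1_def d2_def d3_def algebra_simps)
  then have s1: "sc 1 d1 + sc 2 d2 + sc 3 d3 = 0"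
    using derivation_add[OF derivation] N Dd derivation_zero[OF derivation] by (metis nspace_add)
  then have "sc 1 (sc 1 d1) + sc 2 (sc 2 d2) + sc 3 (sc 3 d3) = 0"
    using derivation_add[OF derivation] derivation_sc[OF derivation] N Dd
      derivation_zero[OF derivation]
    by (metis nspace_add VS.subspace_scale[OF subspace_nspace])
  then have "d1 k = 0 \<and> d2 k = 0 \<and> d3 k = 0" for k
    using fun_cong[OF s0, of k] fun_cong[OF s1, of k]
    by (intro vandermonde_123_zero) (auto dest!: fun_cong[of _ _ k] simp: algebra_simps)
  then show ?thesis
    by (simp add: d1_def d2_def d3_def fun_eq_iff)
qed

lemma eigsp_decomposition:
  assumes derivation: "is_derivation n D" and "diagonalizable n D"
    and eigvals: "eigvals n D \<subseteq> {1, 2, 3}" and v: "v \<in> nspace n"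
  obtains x1 x2 x3 where "x1 \<in> eigsp n D 1" "x2 \<in> eigsp n D 2" "x3 \<in> eigsp n D 3"
    "v = x1 + x2 + x3"
proof -
  obtain B where B: "B \<subseteq> nspace n" "\<not> VS.dependent B" "VS.span B = nspace n"
      "\<forall>b\<in>B. \<exists>l. D b = sc l b"
    using assms(2) unfolding diagonalizable_def by blast
  have "B \<subseteq> eigsp n D 1 \<union> (eigsp n D 2 \<union> eigsp n D 3)"
  proof
    fix b assume b: "b \<in> B"
    then obtain l where l: "D b = sc l b" using B(4) by blast
    have "b \<noteq> 0" using b B(2) VS.dependent_zero by blast
    then have "l \<in> eigvals n D" using l b B(1) unfolding eigvals_def by blast
    then show "b \<in> eigsp n D 1 \<union> (eigsp n D 2 \<union> eigsp n D 3)"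
      using eigvals l b B(1) by (auto simp: eigsp_def)
  qed
  then have "v \<in> VS.span (eigsp n D 1 \<union> (eigsp n D 2 \<union> eigsp n D 3))"
    using v B(3) VS.span_mono by blast
  moreover have "VS.span (eigsp n D l) = eigsp n D l" for l
    using subspace_eigsp[OF derivation] by simp
  ultimately show ?thesis
    using that unfolding VS.span_Un by (auto simp: add.assoc)
qed

lemma is_gradingI:
  fixes G :: "nat \<Rightarrow> (nb \<Rightarrow> 'k::field) set"
  assumes subspace: "\<And>i. i \<in> {1, 2, 3} \<Longrightarrow> VS.subspace (G i) \<and> G i \<subseteq> nspace n"
    and decomposition: "\<And>v. v \<in> nspace n \<Longrightarrow> \<exists>x1 x2 x3. x1 \<in> G 1 \<and> x2 \<in> G 2 \<and> x3 \<in> G 3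
        \<and> v = x1 + x2 + x3"
    and unique: "\<And>x1 x2 x3 y1 y2 y3. x1 \<in> G 1 \<Longrightarrow> x2 \<in> G 2 \<Longrightarrow> x3 \<in> G 3 \<Longrightarrow>
        y1 \<in> G 1 \<Longrightarrow> y2 \<in> G 2 \<Longrightarrow> y3 \<in> G 3 \<Longrightarrow> x1 + x2 + x3 = y1 + y2 + y3 \<Longrightarrow>
        x1 = y1 \<and> x2 = y2 \<and> x3 = y3"
    and lie: "\<And>i j x y. i \<in> {1, 2, 3} \<Longrightarrow> j \<in> {1, 2, 3} \<Longrightarrow> x \<in> G i \<Longrightarrow> y \<in> G j \<Longrightarrow>
        lie n x y \<in> (if i + j \<le> 3 then G (i + j) else {0})"
  shows "is_grading n G"
  unfolding is_grading_def
proof (intro conjI ballI)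
  fix i :: nat assume "i \<in> {1, 2, 3}"
  then show "VS.subspace (G i)" "G i \<subseteq> nspace n"
    using subspace by blast+
next
  fix i j :: nat and x y assume "i \<in> {1, 2, 3}" "j \<in> {1, 2, 3}" "x \<in> G i" "y \<in> G j"
  then show "lie n x y \<in> (if i + j \<le> 3 then G (i + j) else {0})"
    by (rule lie)
next
  fix v :: "nb \<Rightarrow> 'k" assume "v \<in> nspace n"
  then obtain x1 x2 x3 where x: "x1 \<in> G 1" "x2 \<in> G 2" "x3 \<in> G 3" "v = x1 + x2 + x3"
    using decomposition by blast
  show "\<exists>!t. fst t \<in> G 1 \<and> fst (snd t) \<in> G 2 \<and> snd (snd t) \<in> G 3
      \<and> v = fst t + fst (snd t) + snd (snd t)"
  proof (rule ex1I[of _ "(x1, x2, x3)"])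
    fix t :: "(nb \<Rightarrow> 'k) \<times> (nb \<Rightarrow> 'k) \<times> (nb \<Rightarrow> 'k)"
    obtain t1 t2 t3 where t: "t = (t1, t2, t3)"
      by (cases t) blast
    assume "fst t \<in> G 1 \<and> fst (snd t) \<in> G 2 \<and> snd (snd t) \<in> G 3
      \<and> v = fst t + fst (snd t) + snd (snd t)"
    then have "t1 \<in> G 1" "t2 \<in> G 2" "t3 \<in> G 3" "t1 + t2 + t3 = x1 + x2 + x3"
      using x(4) by (simp_all add: t)
    then show "t = (x1, x2, x3)"
      using unique x(1-3) by (simp add: t)
  qed (use x in simp)
qed

lemma eigsp_grading:
  fixes D :: "(nb \<Rightarrow> 'k::field_char_0) \<Rightarrow> (nb \<Rightarrow> 'k)"
  assumes derivation: "is_derivation n D" and "diagonalizable n D"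
    and eigvals: "eigvals n D = {1, 2, 3}"
  shows "is_grading n (\<lambda>i. eigsp n D (of_nat i))"
proof (rule is_gradingI)
  show "VS.subspace (eigsp n D (of_nat i)) \<and> eigsp n D (of_nat i) \<subseteq> nspace n" for i
    using subspace_eigsp[OF derivation] by (auto simp: eigsp_def)
  show "\<exists>x1 x2 x3. x1 \<in> eigsp n D (of_nat 1) \<and> x2 \<in> eigsp n D (of_nat 2)
      \<and> x3 \<in> eigsp n D (of_nat 3) \<and> v = x1 + x2 + x3" if "v \<in> nspace n" for v
    using eigsp_decomposition[OF derivation assms(2) _ that] eigvals
    by (metis of_nat_1 of_nat_numeral order_refl)
  show "x1 = y1 \<and> x2 = y2 \<and> x3 = y3"
    if "x1 \<in> eigsp n D (of_nat 1)" "x2 \<in> eigsp n D (of_nat 2)" "x3 \<in> eigsp n D (of_nat 3)"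
      "y1 \<in> eigsp n D (of_nat 1)" "y2 \<in> eigsp n D (of_nat 2)" "y3 \<in> eigsp n D (of_nat 3)"
      "x1 + x2 + x3 = y1 + y2 + y3" for x1 x2 x3 y1 y2 y3
    using eigsp_123_unique[OF derivation] that by simp
  fix i j :: nat and x y
  assume "x \<in> eigsp n D (of_nat i)" "y \<in> eigsp n D (of_nat j)"
  then have xy: "lie n x y \<in> eigsp n D (of_nat (i + j))"
    using lie_eigsp[OF derivation] by simp
  show "lie n x y \<in> (if i + j \<le> 3 then eigsp n D (of_nat (i + j)) else {0})"
  proof (cases "i + j \<le> 3")
    case True
    then show ?thesis using xy by simp
  next
    case False
    then have "of_nat (i + j) \<notin> eigvals n D"
      using eigvals
        of_nat_eq_iff[of "i + j" 1] of_nat_eq_iff[of "i + j" 2] of_nat_eq_iff[of "i + j" 3]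
      by (simp add: eval_nat_numeral)
    then show ?thesis
      using xy False by (auto simp: eigvals_def eigsp_def)
  qed
qed

theorem mainTheorem5:
  fixes n :: nat
  assumes "n \<ge> 1"
  shows "(\<forall>D :: (nb \<Rightarrow> 'k::field_char_0) \<Rightarrow> (nb \<Rightarrow> 'k).
            is_derivation n D \<and> diagonalizable n D \<and> eigvals n D = {1, 2, 3} \<longrightarrow>
              ndim (eigsp n D 1) = n + 3
            \<and> ndim (eigsp n D 2) = n * (n + 1) div 2 + 3
            \<and> ndim (eigsp n D 3) = 2 * n + 2)
       \<and> (\<forall>G :: nat \<Rightarrow> (nb \<Rightarrow> 'k) set. is_grading n G \<longrightarrow>
              ndim (G 1) = n + 3
            \<and> ndim (G 2) = n * (n + 1) div 2 + 3
            \<and> ndim (G 3) = 2 * n + 2)"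
proof (rule conjI; intro allI impI)
  fix D :: "(nb \<Rightarrow> 'k) \<Rightarrow> (nb \<Rightarrow> 'k)"
  assume "is_derivation n D \<and> diagonalizable n D \<and> eigvals n D = {1, 2, 3}"
  then interpret grading n "\<lambda>i. eigsp n D (of_nat i)"
    by (intro grading.intro eigsp_grading) auto
  show "ndim (eigsp n D 1) = n + 3 \<and> ndim (eigsp n D 2) = n * (n + 1) div 2 + 3
      \<and> ndim (eigsp n D 3) = 2 * n + 2"
    using dim_G by simp
next
  fix G :: "nat \<Rightarrow> (nb \<Rightarrow> 'k) set"
  assume "is_grading n G"
  then interpret grading n G
    by (rule grading.intro)
  show "ndim (G 1) = n + 3 \<and> ndim (G 2) = n * (n + 1) div 2 + 3 \<and> ndim (G 3) = 2 * n + 2"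
    using dim_G by simp
qed

end
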